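(* Fix $\tau\in(0,1)$ and consider the moment function $\rho(y,q)=\tau-\mathbb I[y\le q]$ ($m=0$), so that $q_a^*(x;\tau)$, the $\tau$-quantile of $Y\mid X=x,A=a$, plays the role of $\kappa_a^*$ and the CDTE is the conditional quantile treatment effect $\mathrm{CQTE}(x;\tau)=q_1^*(x;\tau)-q_0^*(x;\tau)$. Assume the conditional distributions of $Y$ given $X=x,A=a$ are continuous. Then the general pseudo-outcome (defined in the context) specializes to $$\psi^{\mathrm{CQTE}}(Z,e,q,f)=q_1(X;\tau)-q_0(X;\tau)+\frac{A-e(X)}{e(X)(1-e(X))}\,\frac{1}{f_A(X)}\big(\tau-\mathbb I[Y\le q_A(X;\tau)]\big),$$ where $f_a$ is a stand-in for $f_a^*(x)=f_{Y\mid X=x,A=a}(q_a^*(x;\tau))$, the conditional density of $Y$ given $X=x,A=a$ evaluated at the conditional quantile. Furthermore, if the Boundedness Assumption (in the context) holds and the cross-fitted nuisance estimates $(\hat e^{(k)},\hat q^{(k)},\hat f^{(k)})$ lie in $\Xi$, then $$\mathcal E\lesssim\sum_{k=1}^K\sum_{a=0}^1\|\hat q_a^{(k)}-q_a^*\|\Big(\|\hat e^{(k)}-e^*\|+\Big\|\frac{1}{\hat f^{(k)}_a}-\frac{1}{f^*_a}\Big\|+\|\hat q^{(k)}_a-q^*_a\|\Big).$$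
   Context: $Z=(X,A,Y)$ with $X\in\mathcal X$, $A\in\{0,1\}$, $Y\in\mathbb R$, $e^*(x)=P(A=1\mid X=x)$; $\|g\|=\mathbb E[g^2]^{1/2}$. $D$ denotes directional derivatives. General setting: for a moment function $\rho:\mathbb R\times\mathbb R^{m+1}\to\mathbb R^{m+1}$, $\rho(y,\nu)$ with $\nu=(\kappa,h)$, $\nu_a^*(x)=(\kappa_a^*(x),h_a^*(x))$ solves $\mathbb E[\rho(Y,\nu)\mid X=x,A=a]=0$; $J_a^*(x)=D_\nu\{\mathbb E[\rho(Y,\nu)\mid X=x,A=a]\}|_{\nu=\nu_a^*(x)}$ (assumed invertible) and $\alpha_a^*(x)$ is the first row of $J_a^*(x)^{-1}$. The pseudo-outcome for stand-ins $(e,\alpha,\nu)$ is $\psi(Z,e,\alpha,\nu)=\kappa_1(X)-\kappa_0(X)-\frac{A-e(X)}{e(X)(1-e(X))}\alpha_A(X)^T\rho(Y,\nu_A(X))$. Cross-fitting: given $n$ i.i.d. copies of $Z$, $K\ge2$ folds $I_k=\{i:i\equiv k-1\pmod K\}$, nuisance estimates $(\hat e^{(k)},\hat\alpha^{(k)},\hat\nu^{(k)})$ built from data outside $I_k$. $\mathcal E=\sum_{k=1}^K\mathcal E(\hat e^{(k)},\hat\alpha^{(k)},\hat\nu^{(k)})$, where $\mathcal E(e,\alpha,\nu)=\sum_{a=0}^1\big(\|\kappa_a-\kappa_a^*\|\|e-e^*\|+\sum_{i,j}G_{ij}\|\alpha_{a,i}-\alpha^*_{a,i}\|\|\nu_{a,j}-\nu^*_{a,j}\|+\sum_{i,j}H_{ij}\|\nu_{a,i}-\nu^*_{a,i}\|\|\nu_{a,j}-\nu^*_{a,j}\|\big)$.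 Boundedness Assumption: for a set $\Xi$ of nuisance realizations, there exist $c_1>0,c_2\ge0,c_3\ge0,c_4>0,c_5\ge0$ and $G,H\in\{0,1\}^{(m+1)\times(m+1)}$ such that for all $(e,\alpha,\nu)\in\Xi$, $a$, $i,j,l$, and $\bar\nu_a$ in the convex hull of $\{\nu_a^*,\nu_a\}$: $e^*(X),e(X)\in[c_1,1-c_1]$; $|D_{\nu_{a,j}}\mathbb E[\rho_i(Y,\nu_a)\mid X,A=a]|_{\nu_a=\bar\nu_a}|\le c_2G_{ij}$; $|D_{\nu_{a,l}}D_{\nu_{a,j}}\mathbb E[\rho_i(Y,\nu_a)\mid X=x,A=a]|_{\nu_a=\bar\nu_a}|\le c_3H_{jl}$; $\det(D_{\nu_a}\{\mathbb E[\rho(Y,\nu_a)\mid X=x,A=a]\}|_{\nu_a=\bar\nu_a})>c_4$; $|\rho_i(Y,\bar\nu_a)|\le c_5$. *)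

theory Defs
  imports "HOL-Probability.Probability"
begin

text \<open>Observed data: a probability space M, covariates X with values in a measurable
space SX, treatment A in {0,1} (encoded as nat), outcome Y real. The case m = 0 of the general
setting: the moment function is scalar, rho :: real => real => real, the nuisance
nu_a = kappa_a is scalar, the Jacobian J is 1x1 and alpha is 1/J.\<close>

definition cond_dist ::
  "'w measure \<Rightarrow> 'x measure \<Rightarrow> ('w \<Rightarrow> 'x) \<Rightarrow> ('w \<Rightarrow> nat) \<Rightarrow> ('w \<Rightarrow> real)
   \<Rightarrow> ('x \<Rightarrow> nat \<Rightarrow> real measure) \<Rightarrow> bool" where
  "cond_dist M SX X A Y K \<longleftrightarrow>
     (\<forall>x a. prob_space (K x a) \<and> sets (K x a) = sets borel) \<and>
     (\<forall>a C. C \<in> sets borel \<longrightarrow> (\<lambda>x. measure (K x a) C) \<in> borel_measurable SX) \<and>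
     (\<forall>B C a. B \<in> sets SX \<longrightarrow> C \<in> sets borel \<longrightarrow> a \<in> {0,1} \<longrightarrow>
        measure M {\<omega> \<in> space M. X \<omega> \<in> B \<and> A \<omega> = a \<and> Y \<omega> \<in> C}
        = (\<integral>\<omega>. indicator {\<omega> \<in> space M. X \<omega> \<in> B \<and> A \<omega> = a} \<omega>
                   * measure (K (X \<omega>) a) C \<partial>M))"

definition propensity ::
  "'w measure \<Rightarrow> 'x measure \<Rightarrow> ('w \<Rightarrow> 'x) \<Rightarrow> ('w \<Rightarrow> nat) \<Rightarrow> ('x \<Rightarrow> real) \<Rightarrow> bool" where
  "propensity M SX X A e \<longleftrightarrow> e \<in> borel_measurable SX \<and>
     (\<forall>B \<in> sets SX. measure M {\<omega> \<in> space M. X \<omega> \<in> B \<and> A \<omega> = 1}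
        = (\<integral>\<omega>. indicator {\<omega> \<in> space M. X \<omega> \<in> B} \<omega> * e (X \<omega>) \<partial>M))"

definition cond_moment ::
  "('x \<Rightarrow> nat \<Rightarrow> real measure) \<Rightarrow> (real \<Rightarrow> real \<Rightarrow> real) \<Rightarrow> nat \<Rightarrow> 'x \<Rightarrow> real \<Rightarrow> real" where
  "cond_moment K \<rho> a x \<nu> = (\<integral>y. \<rho> y \<nu> \<partial>(K x a))"

definition quantile :: "real \<Rightarrow> real measure \<Rightarrow> real" where
  "quantile \<tau> P = Inf {q. \<tau> \<le> measure P {..q}}"

definition rho_q :: "real \<Rightarrow> real \<Rightarrow> real \<Rightarrow> real" where
  "rho_q \<tau> y q = \<tau> - (if y \<le> q then 1 else 0)"

definition psi_gen ::
  "(real \<Rightarrow> real \<Rightarrow> real) \<Rightarrow> ('x \<Rightarrow> real) \<Rightarrow> (nat \<Rightarrow> 'x \<Rightarrow> real) \<Rightarrow> (nat \<Rightarrow> 'x \<Rightarrow> real)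
    \<Rightarrow> 'x \<times> nat \<times> real \<Rightarrow> real" where
  "psi_gen \<rho> e \<alpha> \<nu> z = (case z of (x, a, y) \<Rightarrow>
     \<nu> 1 x - \<nu> 0 x - (real a - e x) / (e x * (1 - e x)) * \<alpha> a x * \<rho> y (\<nu> a x))"

definition psi_cqte ::
  "real \<Rightarrow> ('x \<Rightarrow> real) \<Rightarrow> (nat \<Rightarrow> 'x \<Rightarrow> real) \<Rightarrow> (nat \<Rightarrow> 'x \<Rightarrow> real)
    \<Rightarrow> 'x \<times> nat \<times> real \<Rightarrow> real" where
  "psi_cqte \<tau> e q f z = (case z of (x, a, y) \<Rightarrow>
     q 1 x - q 0 x + (real a - e x) / (e x * (1 - e x)) * (1 / f a x)
       * (\<tau> - (if y \<le> q a x then 1 else 0)))"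

definition L2n :: "'w measure \<Rightarrow> ('w \<Rightarrow> 'x) \<Rightarrow> ('x \<Rightarrow> real) \<Rightarrow> ennreal" where
  "L2n M X g = (let I = (\<integral>\<^sup>+ \<omega>. ennreal ((g (X \<omega>))\<^sup>2) \<partial>M) in
     if I = \<infinity> then \<infinity> else ennreal (sqrt (enn2real I)))"

text \<open>Error functional E(e, alpha, nu) for m = 0 (G, H are 1x1 0/1 matrices).\<close>
definition err_E ::
  "'w measure \<Rightarrow> ('w \<Rightarrow> 'x) \<Rightarrow> nat \<Rightarrow> nat \<Rightarrow> ('x \<Rightarrow> real) \<Rightarrow> (nat \<Rightarrow> 'x \<Rightarrow> real)
   \<Rightarrow> (nat \<Rightarrow> 'x \<Rightarrow> real) \<Rightarrow> ('x \<Rightarrow> real) \<Rightarrow> (nat \<Rightarrow> 'x \<Rightarrow> real) \<Rightarrow> (nat \<Rightarrow> 'x \<Rightarrow> real)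
   \<Rightarrow> ennreal" where
  "err_E M X G H estar astar nstar e \<alpha> \<nu> =
     (\<Sum>a\<in>{0,1}.
        L2n M X (\<lambda>x. \<nu> a x - nstar a x) * L2n M X (\<lambda>x. e x - estar x)
      + of_nat G * L2n M X (\<lambda>x. \<alpha> a x - astar a x) * L2n M X (\<lambda>x. \<nu> a x - nstar a x)
      + of_nat H * L2n M X (\<lambda>x. \<nu> a x - nstar a x) * L2n M X (\<lambda>x. \<nu> a x - nstar a x))"

text \<open>Boundedness Assumption (m = 0) for a set Xi of nuisance realizations (e, q, f);
 the nuisance nu is q.
 The determinant of the 1x1 Jacobian is bounded away from 0 in absolute value.\<close>
definition boundedness ::
  "'w measure \<Rightarrow> ('w \<Rightarrow> 'x) \<Rightarrow> ('w \<Rightarrow> real) \<Rightarrow> ('x \<Rightarrow> real) \<Rightarrow> (nat \<Rightarrow> 'x \<Rightarrow> real)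
   \<Rightarrow> (real \<Rightarrow> real \<Rightarrow> real) \<Rightarrow> (nat \<Rightarrow> 'x \<Rightarrow> real \<Rightarrow> real)
   \<Rightarrow> (('x \<Rightarrow> real) \<times> (nat \<Rightarrow> 'x \<Rightarrow> real) \<times> (nat \<Rightarrow> 'x \<Rightarrow> real)) set
   \<Rightarrow> real \<Rightarrow> real \<Rightarrow> real \<Rightarrow> real \<Rightarrow> real \<Rightarrow> nat \<Rightarrow> nat \<Rightarrow> bool" where
  "boundedness M X Y estar nstar \<rho> \<Phi> \<Xi> c1 c2 c3 c4 c5 G H \<longleftrightarrow>
     c1 > 0 \<and> c2 \<ge> 0 \<and> c3 \<ge> 0 \<and> c4 > 0 \<and> c5 \<ge> 0 \<and> G \<in> {0,1} \<and> H \<in> {0,1} \<and>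
     (\<forall>(e, q, f) \<in> \<Xi>. AE \<omega> in M.
        estar (X \<omega>) \<in> {c1..1-c1} \<and> e (X \<omega>) \<in> {c1..1-c1} \<and>
        (\<forall>a \<in> {0,1}. \<forall>nb \<in> closed_segment (nstar a (X \<omega>)) (q a (X \<omega>)).
           \<bar>deriv (\<Phi> a (X \<omega>)) nb\<bar> \<le> c2 * real G \<and>
           \<bar>deriv (deriv (\<Phi> a (X \<omega>))) nb\<bar> \<le> c3 * real H \<and>
           \<bar>deriv (\<Phi> a (X \<omega>)) nb\<bar> > c4 \<and>
           \<bar>\<rho> (Y \<omega>) nb\<bar> \<le> c5))"

end

theory Submission
  imports Defs
begin

(* For a conditional law with density f and CDF F, the moment q \<mapsto> \<tau> - F q vanishes at the
   \<tau>-quantile q* (F is continuous there) and has derivative -f q* by the fundamental theorem of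
   calculus, so \<alpha>* = -1/f*. The error functional is already bilinear in the nuisance errors with
   coefficients G, H \<in> {0,1}, so the bound holds with constant 1: of the Boundedness Assumption
   only G, H \<in> {0,1} is used. *)

lemma measure_density_lborel:
  fixes f :: "real \<Rightarrow> real"
  assumes f: "f \<in> borel_measurable borel" and nonneg: "\<And>y. 0 \<le> f y"
    and fin: "finite_measure (density lborel f)" and S: "S \<in> sets borel"
  shows "set_integrable lborel S f" and "measure (density lborel f) S = (LINT y:S|lborel. f y)"
proof -
  interpret finite_measure "density lborel f" by (rule fin)
  have "integrable (density lborel f) (indicator S :: real \<Rightarrow> real)"
    using S by (intro integrable_real_indicator) (auto simp: less_top[symmetric])
  then show "set_integrable lborel S f"
    using f nonneg S by (simp add: integrable_density set_integrable_def mult.commute)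
  have "measure (density lborel f) S = (\<integral>y. indicator S y \<partial>density lborel f)"
    using S by simp
  also have "\<dots> = (\<integral>y. f y *\<^sub>R indicator S y \<partial>lborel)"
    using f nonneg S by (intro integral_density) auto
  also have "\<dots> = (LINT y:S|lborel. f y)"
    by (simp add: set_lebesgue_integral_def mult.commute)
  finally show "measure (density lborel f) S = (LINT y:S|lborel. f y)" .
qed

lemma cdf_density_has_real_derivative:
  fixes f :: "real \<Rightarrow> real"
  assumes f: "f \<in> borel_measurable borel" and nonneg: "\<And>y. 0 \<le> f y"
    and fin: "finite_measure (density lborel f)" and cont: "isCont f p"
  shows "(cdf (density lborel f) has_real_derivative f p) (at p)"
proof -
  let ?P = "density lborel f"
  have Icc: "measure ?P {a..u} = integral {a..u} f" for a u
    using measure_density_lborel[OF f nonneg fin, of "{a..u}"] set_borel_integral_eq_integral(2)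
    by simp
  have split: "cdf ?P u = measure ?P {..<p - 1} + integral {p - 1..u} f" if "p - 1 < u" for u
  proof -
    have "{..u} = {..<p - 1} \<union> {p - 1..u}" "{..<p - 1} \<inter> {p - 1..u} = {}"
      using that by auto
    then show ?thesis
      using finite_measure.finite_measure_Union[OF fin, of "{..<p - 1}" "{p - 1..u}"]
      by (simp add: cdf_def Icc)
  qed
  have "f integrable_on {p - 1..p + 1}"
    using measure_density_lborel(1)[OF f nonneg fin, of "{p - 1..p + 1}"]
    by (simp add: set_borel_integral_eq_integral(1))
  then have "((\<lambda>u. integral {p - 1..u} f) has_vector_derivative f p) (at p within {p - 1..p + 1})"
    using integral_has_vector_derivative_continuous_at[of f "p - 1" "p + 1" p "{}"]
      continuous_at_imp_continuous_at_within[OF cont] by simp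
  then have "((\<lambda>u. measure ?P {..<p - 1} + integral {p - 1..u} f) has_real_derivative f p) (at p)"
    by (auto simp: has_real_derivative_iff_has_vector_derivative at_within_Icc_at
             intro!: derivative_eq_intros)
  then show ?thesis
    by (rule has_field_derivative_transform_within_open[where S = "{p - 1<..}"]) (auto simp: split)
qed

context real_distribution
begin

lemma cdf_around_quantile:
  assumes "0 < \<tau>" "\<tau> < 1"
  shows cdf_below_quantile: "q < quantile \<tau> M \<Longrightarrow> cdf M q < \<tau>"
    and cdf_above_quantile: "quantile \<tau> M < q \<Longrightarrow> \<tau> \<le> cdf M q"
proof -
  define S where "S = {q. \<tau> \<le> cdf M q}"
  have quantile_eq: "quantile \<tau> M = Inf S"
    by (simp add: quantile_def S_def cdf_def)
  obtain q1 where "\<tau> < cdf M q1"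
    using eventually_happens[OF order_tendstoD(1)[OF cdf_lim_at_top_prob \<open>\<tau> < 1\<close>]] by auto
  then have "S \<noteq> {}" by (auto simp: S_def intro: less_imp_le)
  obtain q0 where q0: "cdf M q0 < \<tau>"
    using eventually_happens[OF order_tendstoD(2)[OF cdf_lim_at_bot \<open>0 < \<tau>\<close>]] by auto
  have "q0 \<le> s" if "s \<in> S" for s
  proof (rule ccontr)
    assume "\<not> q0 \<le> s"
    then have "cdf M s \<le> cdf M q0" by (simp add: cdf_nondecreasing)
    with q0 that show False by (simp add: S_def)
  qed
  then have "bdd_below S" by (auto simp: bdd_below_def)
  show "cdf M q < \<tau>" if "q < quantile \<tau> M"
    using that cInf_lower[OF _ \<open>bdd_below S\<close>, of q] by (force simp: quantile_eq S_def)
  show "\<tau> \<le> cdf M q" if above: "quantile \<tau> M < q"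
  proof -
    obtain s where "s \<in> S" "s < q"
      using above cInf_less_iff[OF \<open>S \<noteq> {}\<close> \<open>bdd_below S\<close>] by (auto simp: quantile_eq)
    then show ?thesis
      using cdf_nondecreasing[of s q] by (simp add: S_def)
  qed
qed

lemma cdf_quantile:
  assumes "0 < \<tau>" "\<tau> < 1" and cont: "isCont (cdf M) (quantile \<tau> M)"
  shows "cdf M (quantile \<tau> M) = \<tau>"
proof -
  let ?q = "quantile \<tau> M"
  have left: "(cdf M \<longlongrightarrow> cdf M ?q) (at_left ?q)" and right: "(cdf M \<longlongrightarrow> cdf M ?q) (at_right ?q)"
    using cont by (simp_all add: isCont_def filterlim_at_split)
  have "eventually (\<lambda>q. cdf M q \<le> \<tau>) (at_left ?q)"
    using eventually_at_left_real[of "?q - 1" ?q] cdf_below_quantile[OF assms(1,2)]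
    by (auto elim!: eventually_mono intro: less_imp_le)
  with left have "cdf M ?q \<le> \<tau>"
    by (intro tendsto_upperbound) auto
  moreover have "eventually (\<lambda>q. \<tau> \<le> cdf M q) (at_right ?q)"
    using eventually_at_right_real[of ?q "?q + 1"] cdf_above_quantile[OF assms(1,2)]
    by (auto elim!: eventually_mono)
  with right have "\<tau> \<le> cdf M ?q"
    by (intro tendsto_lowerbound) auto
  ultimately show ?thesis by simp
qed

end

lemma integral_rho_q:
  assumes "prob_space P" "sets P = sets borel"
  shows "(\<integral>y. rho_q \<tau> y q \<partial>P) = \<tau> - cdf P q"
proof -
  interpret prob_space P by (rule assms(1))
  have "{..q} \<in> sets P" using assms(2) by simp
  then have "integrable P (indicator {..q} :: real \<Rightarrow> real)"
    by (simp add: less_top[symmetric])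
  moreover have "(\<lambda>y. rho_q \<tau> y q) = (\<lambda>y. \<tau> - indicator {..q} y)"
    by (auto simp: rho_q_def fun_eq_iff split: split_indicator)
  ultimately show ?thesis
    using \<open>{..q} \<in> sets P\<close> by (simp add: prob_space cdf_def)
qed

lemma quantile_moment_density:
  fixes f :: "real \<Rightarrow> real"
  assumes P: "P = density lborel f" and f: "f \<in> borel_measurable borel" and nonneg: "\<And>y. 0 \<le> f y"
    and prob: "prob_space P" and "0 < \<tau>" "\<tau> < 1" and cont: "isCont f (quantile \<tau> P)"
  shows "(\<integral>y. rho_q \<tau> y (quantile \<tau> P) \<partial>P) = 0"
    and "((\<lambda>q. \<integral>y. rho_q \<tau> y q \<partial>P) has_real_derivative - f (quantile \<tau> P)) (at (quantile \<tau> P))"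
proof -
  let ?q = "quantile \<tau> P"
  interpret real_distribution P
    using prob by (simp add: P real_distribution_def real_distribution_axioms_def)
  have moment: "(\<integral>y. rho_q \<tau> y q \<partial>P) = \<tau> - cdf P q" for q
    using integral_rho_q[OF prob] by simp
  have "(cdf P has_real_derivative f ?q) (at ?q)"
    using cdf_density_has_real_derivative[OF f nonneg _ cont] finite_measure_axioms by (simp add: P)
  then have "cdf P ?q = \<tau>" and "((\<lambda>q. \<tau> - cdf P q) has_real_derivative - f ?q) (at ?q)"
    using cdf_quantile[OF \<open>0 < \<tau>\<close> \<open>\<tau> < 1\<close> DERIV_isCont] by (auto intro!: derivative_eq_intros)
  then show "(\<integral>y. rho_q \<tau> y ?q \<partial>P) = 0"
    and "((\<lambda>q. \<integral>y. rho_q \<tau> y q \<partial>P) has_real_derivative - f ?q) (at ?q)"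
    by (simp_all add: moment)
qed

lemma psi_gen_rho_q_eq_psi_cqte:
  "psi_gen (rho_q \<tau>) e (\<lambda>a x. - 1 / f a x) q z = psi_cqte \<tau> e q f z"
  by (auto simp: psi_gen_def psi_cqte_def rho_q_def split: prod.splits)

lemma L2n_uminus: "L2n M X (\<lambda>x. - g x) = L2n M X g"
  by (simp add: L2n_def)

lemma err_E_le:
  assumes "G \<le> 1" "H \<le> 1"
  shows "err_E M X G H estar astar nstar e \<alpha> \<nu>
    \<le> (\<Sum>a\<in>{0,1}. L2n M X (\<lambda>x. \<nu> a x - nstar a x)
          * (L2n M X (\<lambda>x. e x - estar x) + L2n M X (\<lambda>x. \<alpha> a x - astar a x)
             + L2n M X (\<lambda>x. \<nu> a x - nstar a x)))"
  unfolding err_E_def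
proof (rule sum_mono)
  fix a
  define u v w where "u = L2n M X (\<lambda>x. \<nu> a x - nstar a x)"
    and "v = L2n M X (\<lambda>x. e x - estar x)" and "w = L2n M X (\<lambda>x. \<alpha> a x - astar a x)"
  have "of_nat G \<le> (1::ennreal)" "of_nat H \<le> (1::ennreal)"
    using assms by simp_all
  then have "of_nat G * w * u \<le> u * w" and "of_nat H * u * u \<le> u * u"
    using mult_right_mono[of "of_nat G" 1 "w * u"] mult_right_mono[of "of_nat H" 1 "u * u"]
    by (simp_all add: mult_ac)
  then show "u * v + of_nat G * w * u + of_nat H * u * u \<le> u * (v + w + u)"
    by (simp add: distrib_left add_mono)
qed

theorem corollary1:
  fixes M :: "'w measure" and SX :: "'x measure"
    and X :: "'w \<Rightarrow> 'x" and A :: "'w \<Rightarrow> nat" and Y :: "'w \<Rightarrow> real"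
    and K :: "'x \<Rightarrow> nat \<Rightarrow> real measure" and dens :: "'x \<Rightarrow> nat \<Rightarrow> real \<Rightarrow> real"
    and estar :: "'x \<Rightarrow> real" and \<tau> :: "real"
    and \<Xi> :: "(('x \<Rightarrow> real) \<times> (nat \<Rightarrow> 'x \<Rightarrow> real) \<times> (nat \<Rightarrow> 'x \<Rightarrow> real)) set"
    and c1 c2 c3 c4 c5 :: real and G H :: nat and nfolds :: nat
  defines "qstar \<equiv> \<lambda>a x. quantile \<tau> (K x a)"
    and "fstar \<equiv> \<lambda>a x. dens x a (quantile \<tau> (K x a))"
    and "\<Phi> \<equiv> cond_moment K (rho_q \<tau>)"
  defines "astar \<equiv> \<lambda>a x. inverse (deriv (\<Phi> a x) (qstar a x))"
  assumes M: "prob_space M"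
    and X: "X \<in> measurable M SX" and A: "A \<in> measurable M (count_space UNIV)"
    and A01: "\<forall>\<omega>\<in>space M. A \<omega> \<in> {0,1}" and Y: "Y \<in> borel_measurable M"
    and K: "cond_dist M SX X A Y K"
    and e: "propensity M SX X A estar"
    and tau: "0 < \<tau>" "\<tau> < 1"
    and dens: "\<forall>x. \<forall>a\<in>{0,1}. dens x a \<in> borel_measurable borel \<and> (\<forall>y. 0 \<le> dens x a y)
                 \<and> K x a = density lborel (\<lambda>y. ennreal (dens x a y))
                 \<and> isCont (dens x a) (qstar a x)"
    and Jinv: "\<forall>x. \<forall>a\<in>{0,1}. deriv (\<Phi> a x) (qstar a x) \<noteq> 0"
    and K2: "nfolds \<ge> 2"
    and bdd: "boundedness M X Y estar qstar (rho_q \<tau>) \<Phi> \<Xi> c1 c2 c3 c4 c5 G H"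
  shows "(\<forall>x. \<forall>a\<in>{0,1}. \<Phi> a x (qstar a x) = 0
                      \<and> (\<Phi> a x has_real_derivative - fstar a x) (at (qstar a x))
                      \<and> astar a x = - 1 / fstar a x)
       \<and> (\<forall>e q f z. psi_gen (rho_q \<tau>) e (\<lambda>a x. - 1 / f a x) q z = psi_cqte \<tau> e q f z)
       \<and> (\<exists>C::real. C > 0 \<and>
           (\<forall>ehat qhat fhat.
              (\<forall>k\<in>{1..nfolds}. (ehat k, qhat k, fhat k) \<in> \<Xi>) \<longrightarrow>
              (\<Sum>k\<in>{1..nfolds}. err_E M X G H estar astar qstar
                                  (ehat k) (\<lambda>a x. - 1 / fhat k a x) (qhat k))
              \<le> ennreal C * (\<Sum>k\<in>{1..nfolds}. \<Sum>a\<in>{0,1}.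
                   L2n M X (\<lambda>x. qhat k a x - qstar a x)
                   * (L2n M X (\<lambda>x. ehat k x - estar x)
                      + L2n M X (\<lambda>x. 1 / fhat k a x - 1 / fstar a x)
                      + L2n M X (\<lambda>x. qhat k a x - qstar a x)))))"
proof -
  have GH: "G \<le> 1" "H \<le> 1"
    using bdd by (auto simp: boundedness_def)
  have moment: "\<Phi> a x (qstar a x) = 0 \<and> (\<Phi> a x has_real_derivative - fstar a x) (at (qstar a x))
      \<and> astar a x = - 1 / fstar a x" if "a \<in> {0,1}" for a x
  proof -
    have f: "dens x a \<in> borel_measurable borel" "\<And>y. 0 \<le> dens x a y"
      and Kxa: "K x a = density lborel (dens x a)" and cont: "isCont (dens x a) (qstar a x)"
      using dens that by auto
    have "prob_space (K x a)"
      using K by (simp add: cond_dist_def)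
    note quantile_moment_density[OF Kxa f this tau cont[unfolded qstar_def]]
    moreover have "\<Phi> a x = (\<lambda>q. \<integral>y. rho_q \<tau> y q \<partial>K x a)"
      by (simp add: \<Phi>_def cond_moment_def fun_eq_iff)
    ultimately have "\<Phi> a x (qstar a x) = 0"
      and D: "(\<Phi> a x has_real_derivative - fstar a x) (at (qstar a x))"
      by (simp_all add: qstar_def fstar_def)
    moreover have "astar a x = - 1 / fstar a x"
      using DERIV_imp_deriv[OF D] by (simp add: astar_def inverse_eq_divide)
    ultimately show ?thesis by simp
  qed
  have alpha_err: "L2n M X (\<lambda>x. - (1 / h a x) - astar a x) = L2n M X (\<lambda>x. 1 / h a x - 1 / fstar a x)"
    if "a \<in> {0,1}" for h :: "nat \<Rightarrow> 'x \<Rightarrow> real" and a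
    using moment[OF that] L2n_uminus[of M X "\<lambda>x. 1 / h a x - 1 / fstar a x"] by simp
  have "err_E M X G H estar astar qstar (ehat k) (\<lambda>a x. - 1 / fhat k a x) (qhat k)
      \<le> (\<Sum>a\<in>{0,1}. L2n M X (\<lambda>x. qhat k a x - qstar a x)
             * (L2n M X (\<lambda>x. ehat k x - estar x) + L2n M X (\<lambda>x. 1 / fhat k a x - 1 / fstar a x)
                + L2n M X (\<lambda>x. qhat k a x - qstar a x)))" for ehat qhat fhat k
    using err_E_le[OF GH, of M X estar astar qstar "ehat k" "\<lambda>a x. - 1 / fhat k a x" "qhat k"]
    by (simp add: alpha_err)
  then show ?thesis
    using moment psi_gen_rho_q_eq_psi_cqte by (intro conjI exI[of _ 1]) (auto intro!: sum_mono)
qed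

end
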